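(* Let $\nu$ be a probability distribution on $\mathbb N_0$ and ${\mathbf T}$ a thinning matrix, and put $\nu'=\nu{\mathbf T}$. Let ${\mathbf Q}$ be a condensation matrix such that $\nu'_k{\mathbf Q}_{k,n}=\nu_n{\mathbf T}_{n,k}$ for all $k,n\in\mathbb N_0$. Then for all $n,k,i,j\in\mathbb N_0$ with $j\ge n$, $i\le j$, $i\le n$ and $\nu_n>0$, $${\mathbf T}_{n,i}{\mathbf Q}_{i,j}{\mathbf T}_{j,k}{\mathbf Q}_{k,n}={\mathbf T}_{n,k}{\mathbf Q}_{k,j}{\mathbf T}_{j,i}{\mathbf Q}_{i,n}.$$
   Context: A thinning matrix is a stochastic matrix ${\mathbf T}$ on $\mathbb N_0$ with ${\mathbf T}_{n,k}=0$ for $k>n$. A condensation matrix is a stochastic matrix ${\mathbf Q}$ on $\mathbb N_0$ with ${\mathbf Q}_{k,n}=0$ for $k>n$. $(\nu{\mathbf T})_k=\sum_n\nu_n{\mathbf T}_{n,k}$. *)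

theory Defs
  imports Complex_Main
begin

definition prob_dist :: "(nat \<Rightarrow> real) \<Rightarrow> bool" where
  "prob_dist \<nu> \<longleftrightarrow> (\<forall>n. \<nu> n \<ge> 0) \<and> \<nu> sums 1"

definition stochastic :: "(nat \<Rightarrow> nat \<Rightarrow> real) \<Rightarrow> bool" where
  "stochastic M \<longleftrightarrow> (\<forall>n k. M n k \<ge> 0) \<and> (\<forall>n. (\<lambda>k. M n k) sums 1)"

definition thinning :: "(nat \<Rightarrow> nat \<Rightarrow> real) \<Rightarrow> bool" where
  "thinning T \<longleftrightarrow> stochastic T \<and> (\<forall>n k. k > n \<longrightarrow> T n k = 0)"

definition condensation :: "(nat \<Rightarrow> nat \<Rightarrow> real) \<Rightarrow> bool" where
  "condensation Q \<longleftrightarrow> stochastic Q \<and> (\<forall>k n. k > n \<longrightarrow> Q k n = 0)"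

definition vec_mat :: "(nat \<Rightarrow> real) \<Rightarrow> (nat \<Rightarrow> nat \<Rightarrow> real) \<Rightarrow> nat \<Rightarrow> real" where
  "vec_mat \<nu> T k = (\<Sum>n. \<nu> n * T n k)"

end

theory Submission
  imports Defs
begin

text \<open>The balance relation \<open>\<nu>'\<^sub>k Q\<^sub>k\<^sub>n = \<nu>\<^sub>n T\<^sub>n\<^sub>k\<close> expresses every
  factor \<open>Q\<^sub>k\<^sub>n\<close> of the cycle through the flux \<open>\<nu>\<^sub>n T\<^sub>n\<^sub>k\<close>; after multiplying both sides
  by \<open>\<nu>'\<^sub>i \<nu>'\<^sub>k\<close> they become the same product of fluxes. If \<open>\<nu>'\<^sub>i = 0\<close>, every flux
  into \<open>i\<close> vanishes, since it is a term of the series \<open>\<nu>'\<^sub>i\<close>, and both sides are zero;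
  likewise for \<open>k\<close>.\<close>

lemma stochastic_le_1:
  assumes "stochastic M"
  shows "M n k \<le> 1"
proof -
  have "(\<lambda>k. M n k) sums 1" and "\<And>k. 0 \<le> M n k"
    using assms by (auto simp: stochastic_def)
  then show ?thesis
    using sum_le_suminf[of "\<lambda>k. M n k" "{k}"] by (auto simp: sums_iff)
qed

lemma vec_mat_term_le:
  assumes "prob_dist \<nu>" and "stochastic T"
  shows "\<nu> m * T m k \<le> vec_mat \<nu> T k"
proof -
  have \<nu>_nonneg: "\<And>m. 0 \<le> \<nu> m" and "summable \<nu>"
    using assms(1) by (auto simp: prob_dist_def sums_iff)
  have T_nonneg: "\<And>m k. 0 \<le> T m k"
    using assms(2) by (simp add: stochastic_def)
  have "summable (\<lambda>m. \<nu> m * T m k)"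
    by (rule summable_comparison_test'[OF \<open>summable \<nu>\<close>, of 0])
      (use \<nu>_nonneg T_nonneg stochastic_le_1[OF assms(2)] in \<open>auto intro: mult_left_le\<close>)
  then show ?thesis
    unfolding vec_mat_def
    using sum_le_suminf[of "\<lambda>m. \<nu> m * T m k" "{m}"] \<nu>_nonneg T_nonneg by auto
qed

context
  fixes \<nu> \<nu>' :: "nat \<Rightarrow> real" and T Q :: "nat \<Rightarrow> nat \<Rightarrow> real"
  assumes balance: "\<And>k n. \<nu>' k * Q k n = \<nu> n * T n k"
    and flux_le: "\<And>m k. \<nu> m * T m k \<le> \<nu>' k"
    and flux_nonneg: "\<And>m k. 0 \<le> \<nu> m * T m k"
begin

lemma cycle_vanishes_at_null_state:
  assumes "\<nu>' i = 0" and "\<nu> n > 0"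
  shows "T n i * Q i j * T j k * Q k n = 0"
    and "T n k * Q k j * T j i * Q i n = 0"
proof -
  have "\<nu> n * T n i = 0"
    using balance[of i n] assms(1) by simp
  with assms(2) show "T n i * Q i j * T j k * Q k n = 0"
    by simp
  have flux_ji: "\<nu> j * T j i = 0"
    using flux_le[of j i] flux_nonneg[of j i] assms(1) by linarith
  consider "T j i = 0" | "\<nu> j = 0" "Q k j = 0" | "\<nu> j = 0" "\<nu>' k = 0"
    using flux_ji balance[of k j] by auto
  then show "T n k * Q k j * T j i * Q i n = 0"
  proof cases
    case 3
    then have "\<nu> n * T n k = 0"
      using balance[of k n] by simp
    with assms(2) show ?thesis by simp
  qed simp_all
qed

lemma cycle_balance:
  assumes "\<nu> n > 0"
  shows "T n i * Q i j * T j k * Q k n = T n k * Q k j * T j i * Q i n"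
proof (cases "\<nu>' i = 0 \<or> \<nu>' k = 0")
  case True
  then show ?thesis
    using cycle_vanishes_at_null_state[OF _ assms] by (metis mult.commute)
next
  case False
  have "\<nu>' i * \<nu>' k * (T n i * Q i j * T j k * Q k n)
        = T n i * (\<nu>' i * Q i j) * T j k * (\<nu>' k * Q k n)"
    by (simp add: algebra_simps)
  also have "\<dots> = T n k * (\<nu>' k * Q k j) * T j i * (\<nu>' i * Q i n)"
    unfolding balance by (simp add: algebra_simps)
  also have "\<dots> = \<nu>' i * \<nu>' k * (T n k * Q k j * T j i * Q i n)"
    by (simp add: algebra_simps)
  finally show ?thesis
    using False by simp
qed

end

theorem mainTheorem3:
  fixes \<nu> :: "nat \<Rightarrow> real" and T Q :: "nat \<Rightarrow> nat \<Rightarrow> real"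
  assumes "prob_dist \<nu>" and "thinning T" and "condensation Q"
    and "\<And>k n. vec_mat \<nu> T k * Q k n = \<nu> n * T n k"
    and "j \<ge> n" and "i \<le> j" and "i \<le> n" and "\<nu> n > 0"
  shows "T n i * Q i j * T j k * Q k n = T n k * Q k j * T j i * Q i n"
proof (rule cycle_balance[where \<nu>' = "vec_mat \<nu> T"])
  have "stochastic T"
    using assms(2) by (simp add: thinning_def)
  then show "\<And>m k. \<nu> m * T m k \<le> vec_mat \<nu> T k"
    using vec_mat_term_le[OF assms(1)] by blast
  show "\<And>m k. 0 \<le> \<nu> m * T m k"
    using assms(1,2) by (simp add: prob_dist_def thinning_def stochastic_def)
qed (use assms(4,8) in auto)

end
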